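(* Let $(X,d)$ be a proper metric space and $f:X\to X$ continuous with $f_*:(\mathcal P_1(X),w_1)\to(\mathcal P_1(X),w_1)$ continuous. Let $B^w\subset\mathcal P_1(X)$ be closed and bounded, $\delta>0$, and $U=U_\delta(B^w)$ its $w_1$-open $\delta$-neighborhood; suppose $\operatorname{cl}U$ is $f_*$-admissible. Let $F_n:\mathcal P_1(X)\to\mathcal P_1(X)$ be continuous maps with \[ \sup_{\mu\in U}w_1(f_*(\mu),F_n(\mu))=\epsilon_n\to0. \] If $f_*$ is uniformly continuous on $U$, then $B^w$ is $\{F_n\}$-admissible.
   Context: A metric space is proper if closed bounded sets are compact. $\mathcal P_1(X)$ is the set of Borel probability measures with finite first moment, metrized by $w_1(\mu,\nu)=\inf_{\pi\in\Pi(\mu,\nu)}\int d(x,y)\,d\pi$. $f_*\mu=\mu\circ f^{-1}$ is the push-forward. A closed bounded set $N$ is $\{F_n\}$-admissible if, for any sequences $\mu_n$ and $m_n\to\infty$ with $F_n^k(\mu_n)\in N$ for all $0\le k\le m_n$, the sequence $F_n^{m_n}(\mu_n)$ has a convergent subsequence. $F$-admissible means this holds with $F_n\equiv F$. *)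

theory Defs
  imports "HOL-Probability.Probability"
begin

definition proper_space :: "'a::metric_space itself \<Rightarrow> bool" where
  "proper_space _ \<longleftrightarrow> (\<forall>S::'a set. closed S \<and> bounded S \<longrightarrow> compact S)"

definition P1 :: "'a::metric_space measure set" where
  "P1 = {\<mu>. sets \<mu> = sets borel \<and> prob_space \<mu> \<and>
            (\<exists>x0. (\<integral>\<^sup>+ x. ennreal (dist x x0) \<partial>\<mu>) < \<infinity>)}"

definition couplings :: "'a::metric_space measure \<Rightarrow> 'a measure \<Rightarrow> ('a \<times> 'a) measure set" where
  "couplings \<mu> \<nu> = {\<pi>. sets \<pi> = sets (borel :: ('a \<times> 'a) measure) \<and> prob_space \<pi> \<and>
                        distr \<pi> borel fst = \<mu> \<and> distr \<pi> borel snd = \<nu>}"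

definition w1 :: "'a::metric_space measure \<Rightarrow> 'a measure \<Rightarrow> real" where
  "w1 \<mu> \<nu> = enn2real (INF \<pi>\<in>couplings \<mu> \<nu>. \<integral>\<^sup>+ p. ennreal (dist (fst p) (snd p)) \<partial>\<pi>)"

definition push :: "('a::metric_space \<Rightarrow> 'a) \<Rightarrow> 'a measure \<Rightarrow> 'a measure" where
  "push f \<mu> = distr \<mu> borel f"

definition w1_closed :: "'a::metric_space measure set \<Rightarrow> bool" where
  "w1_closed N \<longleftrightarrow> N \<subseteq> P1 \<and>
     (\<forall>\<nu>\<in>P1 - N. \<exists>e>0. \<forall>\<mu>\<in>P1. w1 \<nu> \<mu> < e \<longrightarrow> \<mu> \<notin> N)"

definition w1_bounded :: "'a::metric_space measure set \<Rightarrow> bool" where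
  "w1_bounded N \<longleftrightarrow> N \<subseteq> P1 \<and> (\<exists>r. \<forall>\<mu>\<in>N. \<forall>\<nu>\<in>N. w1 \<mu> \<nu> \<le> r)"

definition w1_nbhd :: "'a::metric_space measure set \<Rightarrow> real \<Rightarrow> 'a measure set" where
  "w1_nbhd B \<delta> = {\<mu>\<in>P1. \<exists>\<nu>\<in>B. w1 \<mu> \<nu> < \<delta>}"

definition w1_closure :: "'a::metric_space measure set \<Rightarrow> 'a measure set" where
  "w1_closure U = {\<mu>\<in>P1. \<forall>e>0. \<exists>\<nu>\<in>U. w1 \<mu> \<nu> < e}"

definition w1_continuous :: "('a::metric_space measure \<Rightarrow> 'a measure) \<Rightarrow> bool" where
  "w1_continuous F \<longleftrightarrow> F ` P1 \<subseteq> P1 \<and>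
     (\<forall>\<mu>\<in>P1. \<forall>e>0. \<exists>d>0. \<forall>\<nu>\<in>P1. w1 \<mu> \<nu> < d \<longrightarrow> w1 (F \<mu>) (F \<nu>) < e)"

definition w1_unif_continuous_on :: "'a::metric_space measure set \<Rightarrow> ('a measure \<Rightarrow> 'a measure) \<Rightarrow> bool" where
  "w1_unif_continuous_on U F \<longleftrightarrow>
     (\<forall>e>0. \<exists>d>0. \<forall>\<mu>\<in>U. \<forall>\<nu>\<in>U. w1 \<mu> \<nu> < d \<longrightarrow> w1 (F \<mu>) (F \<nu>) < e)"

definition admissible :: "(nat \<Rightarrow> 'a::metric_space measure \<Rightarrow> 'a measure) \<Rightarrow> 'a measure set \<Rightarrow> bool" where
  "admissible F N \<longleftrightarrow>
     (\<forall>\<mu>s :: nat \<Rightarrow> 'a measure. \<forall>m :: nat \<Rightarrow> nat.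
        filterlim m at_top sequentially \<and>
        (\<forall>n k. k \<le> m n \<longrightarrow> (F n ^^ k) (\<mu>s n) \<in> N) \<longrightarrow>
        (\<exists>r \<nu>. strict_mono r \<and> \<nu> \<in> P1 \<and>
           (\<lambda>j. w1 ((F (r j) ^^ m (r j)) (\<mu>s (r j))) \<nu>) \<longlonglongrightarrow> 0))"

end

theory Submission
  imports Defs
begin

(* The theorem is a shadowing argument for the dynamics of Phi = f_* on (P1, w1), with
   U = U_delta(B).  If an orbit of F n stays in B for K steps and n is large, then the
   Phi-orbit of the same initial measure stays close to it for those K steps: by induction
   on K, the error at step j+1 is bounded by uniform continuity of Phi on U (propagating the
   error at step j) plus sup_U w1 (Phi mu) (F n mu) -> 0.  Given F n-orbits of lengths
   m n -> oo in B, we restart them K n steps before their end, with K n -> oo so slowly that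
   the K n-step shadowing error is at most 1/(K n + 1).  The shadowing Phi-orbits then lie in
   U, admissibility of cl U yields a convergent subsequence of their endpoints, and the
   endpoints of the F n-orbits converge to the same limit.

   Every estimate uses the triangle inequality for w1, which is defined as a bare infimum
   over couplings, so the first three sections establish it: a proper space is separable,
   hence its product Borel sets are generated by rectangles, and two couplings sharing a
   marginal can be glued, up to an arbitrarily small cost, along a countable partition of
   the space into small cells. *)

section \<open>Separability and Borel sets of products\<close>

text \<open>A proper metric space is separable: it is a countable union of compact balls.\<close>

lemma proper_space_separable:
  assumes "proper_space TYPE('a::metric_space)"
  shows "\<exists>d::nat \<Rightarrow> 'a. \<forall>x e. e > 0 \<longrightarrow> (\<exists>n. dist x (d n) < e)"
proof -
  define x0 :: 'a where "x0 = undefined"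
  have cpt: "compact (cball x0 (real R))" for R :: nat
    using assms unfolding proper_space_def by auto
  have "\<exists>C. finite C \<and> cball x0 (real R) \<subseteq> (\<Union>y\<in>C. ball y (1 / Suc m))" for R m :: nat
    using seq_compact_imp_totally_bounded[OF compact_imp_seq_compact[OF cpt[of R]]]
    by (metis divide_pos_pos of_nat_0_less_iff zero_less_Suc zero_less_one)
  then obtain C where C: "\<And>R m. finite (C R m)"
    "\<And>R m. cball x0 (real R) \<subseteq> (\<Union>y\<in>C R m. ball y (1 / Suc m))"
    by metis
  define D where "D = insert x0 (\<Union>R m. C R m)"
  have "countable D" using C(1) unfolding D_def
    by (intro countable_insert countable_UN[OF countableI_type] countable_finite) auto
  have dense: "\<exists>y\<in>D. dist x y < e" if "e > 0" for x e
  proof -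
    obtain R :: nat where "dist x0 x \<le> R" using real_arch_simple by blast
    then have "x \<in> cball x0 (real R)" by auto
    obtain m :: nat where m: "1 / Suc m < e"
      by (rule nat_approx_posE[OF \<open>e > 0\<close>])
    from C(2)[of R m] \<open>x \<in> cball x0 (real R)\<close>
    obtain y where "y \<in> C R m" "dist y x < 1 / Suc m" by auto
    then have "y \<in> D" "dist x y < e" unfolding D_def using m by (auto simp: dist_commute)
    then show ?thesis by blast
  qed
  show ?thesis
  proof (intro exI[of _ "from_nat_into D"] allI impI)
    fix x and e :: real assume "e > 0"
    then obtain y where "y \<in> D" "dist x y < e" using dense by blast
    then show "\<exists>n. dist x (from_nat_into D n) < e"
      using from_nat_into_surj[OF \<open>countable D\<close> \<open>y \<in> D\<close>] by metis
  qed
qed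

text \<open>In a separable metric space the Borel sets of X \<times> X are those of the product
  \<sigma>-algebra; this makes maps into X \<times> X built from pairs Borel measurable.\<close>

lemma sets_borel_pair_separable:
  fixes d :: "nat \<Rightarrow> 'a::metric_space"
  assumes dense: "\<forall>x e. e > 0 \<longrightarrow> (\<exists>n. dist x (d n) < e)"
  shows "sets (borel \<Otimes>\<^sub>M borel :: ('a \<times> 'a) measure) = sets (borel :: ('a \<times> 'a) measure)"
proof (rule antisym)
  have "(\<lambda>x. (fst x, snd x)) \<in> measurable (borel :: ('a \<times> 'a) measure) (borel \<Otimes>\<^sub>M borel)"
    by (intro measurable_Pair borel_measurable_continuous_onI continuous_intros)
  then show "sets (borel \<Otimes>\<^sub>M borel :: ('a \<times> 'a) measure) \<subseteq> sets (borel :: ('a \<times> 'a) measure)"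
    by (auto dest: measurable_sets)
next
  have "open S \<Longrightarrow> S \<in> sets (borel \<Otimes>\<^sub>M borel :: ('a \<times> 'a) measure)" for S
  proof -
    assume S: "open S"
    define r where "r = (\<lambda>m::nat. 1 / real (Suc m))"
    define A where "A = (\<lambda>(i,j,m). ball (d i) (r m) \<times> ball (d j) (r m))"
    have "S \<subseteq> (\<Union>ijm\<in>{ijm. A ijm \<subseteq> S}. A ijm)"
    proof
      fix p assume "p \<in> S"
      obtain x z where p: "p = (x, z)" by (cases p)
      from S \<open>p \<in> S\<close> obtain e where e: "e > 0" "\<And>q. dist q p < e \<Longrightarrow> q \<in> S"
        unfolding open_dist by blast
      obtain m :: nat where "1 / real (Suc m) < e / 4"
        by (rule nat_approx_posE[of "e/4"]) (use e(1) in auto)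
      then have rm: "r m < e / 4" "r m > 0" unfolding r_def by auto
      obtain i j where i: "dist x (d i) < r m" and j: "dist z (d j) < r m"
        using dense rm(2) by blast
      have "A (i,j,m) \<subseteq> S"
      proof
        fix q assume "q \<in> A (i,j,m)"
        then obtain a b where q: "q = (a,b)" "dist (d i) a < r m" "dist (d j) b < r m"
          unfolding A_def by auto
        have "dist a x < 2 * r m" "dist b z < 2 * r m"
          using q i j dist_triangle[of a x "d i"] dist_triangle[of b z "d j"]
          by (simp_all add: dist_commute)
        then have "dist q p < e"
          using sqrt_sum_squares_le_sum[of "dist a x" "dist b z"] rm
          unfolding q p dist_Pair_Pair by simp
        then show "q \<in> S" using e(2) by blast
      qed
      moreover have "p \<in> A (i,j,m)" unfolding A_def p using i j by (simp add: dist_commute)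
      ultimately show "p \<in> (\<Union>ijm\<in>{ijm. A ijm \<subseteq> S}. A ijm)" by blast
    qed
    then have "S = (\<Union>ijm\<in>{ijm. A ijm \<subseteq> S}. A ijm)" by blast
    also have "\<dots> \<in> sets (borel \<Otimes>\<^sub>M borel)"
      by (intro sets.countable_UN') (auto simp: A_def intro!: pair_measureI)
    finally show ?thesis .
  qed
  then have "sigma_sets (space (borel \<Otimes>\<^sub>M borel :: ('a \<times> 'a) measure)) {S. open S}
      \<subseteq> sets (borel \<Otimes>\<^sub>M borel)"
    by (intro sets.sigma_sets_subset) blast
  then show "sets (borel :: ('a \<times> 'a) measure) \<subseteq> sets (borel \<Otimes>\<^sub>M borel)"
    by (simp add: sets_borel space_pair_measure)
qed


section \<open>Gluing couplings\<close>

lemma couplingsD: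
  assumes "\<pi> \<in> couplings \<mu> \<nu>"
  shows "sets \<pi> = sets borel" "prob_space \<pi>" "distr \<pi> borel fst = \<mu>" "distr \<pi> borel snd = \<nu>"
  using assms unfolding couplings_def by auto

lemma fst_borel_measurable[measurable]:
  "fst \<in> borel_measurable (borel :: ('a::metric_space \<times> 'a) measure)"
  by (intro borel_measurable_continuous_onI continuous_intros)

lemma snd_borel_measurable[measurable]:
  "snd \<in> borel_measurable (borel :: ('a::metric_space \<times> 'a) measure)"
  by (intro borel_measurable_continuous_onI continuous_intros)

lemma dist_borel_measurable[measurable]:
  "(\<lambda>z. dist (fst z) (snd z)) \<in> borel_measurable (borel :: ('a::metric_space \<times> 'a) measure)"
  by (intro borel_measurable_continuous_onI continuous_intros)

lemma emeasure_distr_nn_integral: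
  assumes "f \<in> measurable M N" "A \<in> sets N"
  shows "emeasure (distr M N f) A = (\<integral>\<^sup>+x. indicator A (f x) \<partial>M)"
proof -
  have "emeasure (distr M N f) A = (\<integral>\<^sup>+y. indicator A y \<partial>distr M N f)"
    using assms(2) by simp
  also have "\<dots> = (\<integral>\<^sup>+x. indicator A (f x) \<partial>M)"
    using assms by (intro nn_integral_distr) auto
  finally show ?thesis .
qed

lemma distr_eq_from_integrals:
  assumes "f \<in> measurable M borel" "g \<in> measurable N borel"
    and "\<And>A. A \<in> sets borel \<Longrightarrow> (\<integral>\<^sup>+x. indicator A (f x) \<partial>M) = (\<integral>\<^sup>+y. indicator A (g y) \<partial>N)"
  shows "distr M borel f = distr N borel g"
proof (rule measure_eqI)
  fix A assume "A \<in> sets (distr M borel f)"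
  then show "emeasure (distr M borel f) A = emeasure (distr N borel g) A"
    using assms by (simp add: emeasure_distr_nn_integral)
qed simp

text \<open>A separable space splits into countably many Borel cells of diameter less than e:
  c sends a point to the first centre within e/2 of it.\<close>

lemma small_cells:
  fixes d :: "nat \<Rightarrow> 'a::metric_space"
  assumes dense: "\<forall>x e. e > 0 \<longrightarrow> (\<exists>n. dist x (d n) < e)" and "e > 0"
  obtains c :: "'a \<Rightarrow> nat"
  where "c \<in> borel \<rightarrow>\<^sub>M count_space UNIV" "\<And>y y'. c y = c y' \<Longrightarrow> dist y y' < e"
proof
  define c where "c = (\<lambda>y. LEAST n. dist y (d n) < e/2)"
  have c_in: "dist y (d (c y)) < e/2" for y
  proof -
    obtain n where "dist y (d n) < e/2" using dense \<open>e > 0\<close> by (metis half_gt_zero)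
    then show ?thesis unfolding c_def by (rule LeastI)
  qed
  show "dist y y' < e" if "c y = c y'" for y y'
    using c_in[of y] c_in[of y'] that dist_triangle[of y y' "d (c y)"] by (simp add: dist_commute)
  have [measurable]: "Measurable.pred borel (\<lambda>w. dist w (d n) < e/2)" for n
  proof -
    have "{w \<in> space borel. dist w (d n) < e/2} = ball (d n) (e/2)" by (auto simp: dist_commute)
    then show ?thesis unfolding pred_def by simp
  qed
  show "c \<in> borel \<rightarrow>\<^sub>M count_space UNIV" unfolding c_def by measurable
qed

text \<open>Conditional transport inside the cells: the weight cell_weight \<nu> c i j couples a
  point of cell i with a point of cell j uniformly (w.r.t. \<nu>) if i = j and not at all otherwise.\<close>

definition cell_weight :: "'a measure \<Rightarrow> ('a \<Rightarrow> nat) \<Rightarrow> nat \<Rightarrow> nat \<Rightarrow> ennreal" where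
  "cell_weight \<nu> c i j = (if i = j then 1 / emeasure \<nu> {z. c z = i} else 0)"

lemma cell_weight_sym: "cell_weight \<nu> c i j = cell_weight \<nu> c j i"
  unfolding cell_weight_def by auto

lemma cell_weight_integral:
  assumes "prob_space \<nu>" "sets \<nu> = sets borel" and c[measurable]: "c \<in> borel \<rightarrow>\<^sub>M count_space UNIV"
  shows "AE y in \<nu>. (\<integral>\<^sup>+y'. cell_weight \<nu> c (c y) (c y') \<partial>\<nu>) = 1"
proof -
  interpret prob_space \<nu> by fact
  have cell[measurable]: "{y. c y = n} \<in> sets \<nu>" for n
    unfolding \<open>sets \<nu> = sets borel\<close> by measurable
  define nc where "nc n = emeasure \<nu> {y. c y = n}" for n
  have "{y. nc (c y) = 0} = (\<Union>n\<in>{n. nc n = 0}. {y. c y = n})" by auto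
  also have "\<dots> \<in> null_sets \<nu>"
    by (intro null_sets_UN') (auto simp: nc_def intro!: null_setsI)
  finally have "AE y in \<nu>. nc (c y) \<noteq> 0" by (rule AE_I') auto
  moreover have "(\<integral>\<^sup>+y'. cell_weight \<nu> c (c y) (c y') \<partial>\<nu>) = 1" if "nc (c y) \<noteq> 0" for y
  proof -
    have "(\<integral>\<^sup>+y'. cell_weight \<nu> c (c y) (c y') \<partial>\<nu>)
        = (\<integral>\<^sup>+y'. (1 / nc (c y)) * indicator {z. c z = c y} y' \<partial>\<nu>)"
      by (intro nn_integral_cong) (auto simp: cell_weight_def nc_def indicator_def)
    also have "\<dots> = (1 / nc (c y)) * nc (c y)"
      unfolding nc_def by (rule nn_integral_cmult_indicator[OF cell])
    also have "\<dots> = 1"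
    proof -
      have "nc (c y) < top" unfolding nc_def by (simp add: less_top[symmetric])
      then show ?thesis using that by (simp add: ennreal_divide_times)
    qed
    finally show ?thesis .
  qed
  ultimately show ?thesis by auto
qed

lemma cell_weight_marginals:
  assumes p1: "\<pi>1 \<in> couplings \<mu> \<nu>" and p2: "\<pi>2 \<in> couplings \<nu> \<rho>"
    and c[measurable]: "c \<in> borel \<rightarrow>\<^sub>M count_space UNIV"
    and h[measurable]: "h \<in> borel_measurable borel"
  defines "k \<equiv> \<lambda>x. cell_weight \<nu> c (c (snd (fst x))) (c (fst (snd x)))"
  shows "(\<integral>\<^sup>+x. k x * h (fst x) \<partial>(\<pi>1 \<Otimes>\<^sub>M \<pi>2)) = (\<integral>\<^sup>+p. h p \<partial>\<pi>1)"
    and "(\<integral>\<^sup>+x. k x * h (snd x) \<partial>(\<pi>1 \<Otimes>\<^sub>M \<pi>2)) = (\<integral>\<^sup>+q. h q \<partial>\<pi>2)"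
proof -
  note c1 = couplingsD[OF p1] and c2 = couplingsD[OF p2]
  interpret P1: prob_space \<pi>1 by (rule c1(2))
  interpret P2: prob_space \<pi>2 by (rule c2(2))
  interpret PP: pair_prob_space \<pi>1 \<pi>2 by unfold_locales
  have [measurable_cong]: "sets \<pi>1 = sets borel" "sets \<pi>2 = sets borel" by (fact c1(1), fact c2(1))
  have nu1: "\<nu> = distr \<pi>1 borel snd" and nu2: "\<nu> = distr \<pi>2 borel fst"
    using c1(4) c2(3) by simp_all
  have "prob_space \<nu>" unfolding nu1 by (rule P1.prob_space_distr) measurable
  moreover have "sets \<nu> = sets borel" by (simp add: nu1)
  ultimately have AE\<nu>: "AE y in \<nu>. (\<integral>\<^sup>+y'. cell_weight \<nu> c (c y) (c y') \<partial>\<nu>) = 1"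
    using c by (rule cell_weight_integral)
  have "AE p in \<pi>1. (\<integral>\<^sup>+y'. cell_weight \<nu> c (c (snd p)) (c y') \<partial>\<nu>) = 1"
    using AE\<nu> unfolding c1(4)[symmetric] by (rule AE_distrD[rotated]) measurable
  moreover have "(\<integral>\<^sup>+q. cell_weight \<nu> c i (c (fst q)) \<partial>\<pi>2) = (\<integral>\<^sup>+y'. cell_weight \<nu> c i (c y') \<partial>\<nu>)" for i
    unfolding nu2 by (subst nn_integral_distr) auto
  ultimately have AE1: "AE p in \<pi>1. (\<integral>\<^sup>+q. cell_weight \<nu> c (c (snd p)) (c (fst q)) \<partial>\<pi>2) = 1"
    by simp
  have "AE q in \<pi>2. (\<integral>\<^sup>+y. cell_weight \<nu> c (c (fst q)) (c y) \<partial>\<nu>) = 1"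
    using AE\<nu> unfolding c2(3)[symmetric] by (rule AE_distrD[rotated]) measurable
  moreover have "(\<integral>\<^sup>+p. cell_weight \<nu> c (c (snd p)) j \<partial>\<pi>1) = (\<integral>\<^sup>+y. cell_weight \<nu> c j (c y) \<partial>\<nu>)" for j
    unfolding nu1 by (subst nn_integral_distr) (auto simp: cell_weight_sym)
  ultimately have AE2: "AE q in \<pi>2. (\<integral>\<^sup>+p. cell_weight \<nu> c (c (snd p)) (c (fst q)) \<partial>\<pi>1) = 1"
    by simp
  have "(\<integral>\<^sup>+x. k x * h (fst x) \<partial>(\<pi>1 \<Otimes>\<^sub>M \<pi>2))
      = (\<integral>\<^sup>+p. (\<integral>\<^sup>+q. cell_weight \<nu> c (c (snd p)) (c (fst q)) \<partial>\<pi>2) * h p \<partial>\<pi>1)"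
    unfolding k_def by (subst P2.nn_integral_fst[symmetric]) (auto simp: nn_integral_multc)
  moreover have "(\<integral>\<^sup>+x. k x * h (snd x) \<partial>(\<pi>1 \<Otimes>\<^sub>M \<pi>2))
      = (\<integral>\<^sup>+q. (\<integral>\<^sup>+p. cell_weight \<nu> c (c (snd p)) (c (fst q)) \<partial>\<pi>1) * h q \<partial>\<pi>2)"
    unfolding k_def by (subst PP.nn_integral_snd[symmetric]) (auto simp: nn_integral_multc)
  ultimately show "(\<integral>\<^sup>+x. k x * h (fst x) \<partial>(\<pi>1 \<Otimes>\<^sub>M \<pi>2)) = (\<integral>\<^sup>+p. h p \<partial>\<pi>1)"
    and "(\<integral>\<^sup>+x. k x * h (snd x) \<partial>(\<pi>1 \<Otimes>\<^sub>M \<pi>2)) = (\<integral>\<^sup>+q. h q \<partial>\<pi>2)"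
    using AE1 AE2 by (auto intro!: nn_integral_cong_AE)
qed


definition coupling_cost :: "('a::metric_space \<times> 'a) measure \<Rightarrow> ennreal" where
  "coupling_cost \<pi> = (\<integral>\<^sup>+p. ennreal (dist (fst p) (snd p)) \<partial>\<pi>)"

lemma glued_coupling:
  fixes d :: "nat \<Rightarrow> 'a::metric_space" and \<pi>1 \<pi>2 :: "('a \<times> 'a) measure"
  assumes dense: "\<forall>x e. e > 0 \<longrightarrow> (\<exists>n. dist x (d n) < e)"
    and p1: "\<pi>1 \<in> couplings \<mu> \<nu>" and p2: "\<pi>2 \<in> couplings \<nu> \<rho>"
    and [measurable]: "k \<in> borel_measurable (\<pi>1 \<Otimes>\<^sub>M \<pi>2)"
    and marg1: "\<And>h. h \<in> borel_measurable borel \<Longrightarrow>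
      (\<integral>\<^sup>+x. k x * h (fst x) \<partial>(\<pi>1 \<Otimes>\<^sub>M \<pi>2)) = (\<integral>\<^sup>+p. h p \<partial>\<pi>1)"
    and marg2: "\<And>h. h \<in> borel_measurable borel \<Longrightarrow>
      (\<integral>\<^sup>+x. k x * h (snd x) \<partial>(\<pi>1 \<Otimes>\<^sub>M \<pi>2)) = (\<integral>\<^sup>+q. h q \<partial>\<pi>2)"
  defines "\<gamma> \<equiv> distr (density (\<pi>1 \<Otimes>\<^sub>M \<pi>2) k) borel (\<lambda>x. (fst (fst x), snd (snd x)))"
  shows "\<gamma> \<in> couplings \<mu> \<rho>"
    and "\<And>h. h \<in> borel_measurable borel \<Longrightarrow>
      (\<integral>\<^sup>+z. h z \<partial>\<gamma>) = (\<integral>\<^sup>+x. k x * h (fst (fst x), snd (snd x)) \<partial>(\<pi>1 \<Otimes>\<^sub>M \<pi>2))"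
proof -
  note c1 = couplingsD[OF p1] and c2 = couplingsD[OF p2]
  have [measurable_cong]: "sets \<pi>1 = sets borel" "sets \<pi>2 = sets borel" by (fact c1(1), fact c2(1))
  have "(\<lambda>x. (fst (fst x), snd (snd x))) \<in> measurable (\<pi>1 \<Otimes>\<^sub>M \<pi>2) (borel \<Otimes>\<^sub>M borel)"
    by measurable
  then have [measurable]: "(\<lambda>x. (fst (fst x), snd (snd x))) \<in> measurable (\<pi>1 \<Otimes>\<^sub>M \<pi>2) borel"
    unfolding measurable_cong_sets[OF refl sets_borel_pair_separable[OF dense]] .
  have sets_\<gamma>[measurable_cong]: "sets \<gamma> = sets borel" unfolding \<gamma>_def by simp
  show \<gamma>_integral: "(\<integral>\<^sup>+z. h z \<partial>\<gamma>) = (\<integral>\<^sup>+x. k x * h (fst (fst x), snd (snd x)) \<partial>(\<pi>1 \<Otimes>\<^sub>M \<pi>2))"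
    if [measurable]: "h \<in> borel_measurable borel" for h
    unfolding \<gamma>_def by (subst nn_integral_distr) (auto simp: nn_integral_density)
  have "distr \<gamma> borel fst = distr \<pi>1 borel fst"
  proof (rule distr_eq_from_integrals)
    fix A :: "'a set" assume [measurable]: "A \<in> sets borel"
    have "(\<integral>\<^sup>+z. indicator A (fst z) \<partial>\<gamma>) = (\<integral>\<^sup>+x. k x * indicator A (fst (fst x)) \<partial>(\<pi>1 \<Otimes>\<^sub>M \<pi>2))"
      by (rule \<gamma>_integral[of "\<lambda>z. indicator A (fst z)", simplified]) measurable
    also have "\<dots> = (\<integral>\<^sup>+p. indicator A (fst p) \<partial>\<pi>1)"
      by (rule marg1) measurable
    finally show "(\<integral>\<^sup>+z. indicator A (fst z) \<partial>\<gamma>) = (\<integral>\<^sup>+p. indicator A (fst p) \<partial>\<pi>1)" .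
  qed measurable
  moreover have "distr \<gamma> borel snd = distr \<pi>2 borel snd"
  proof (rule distr_eq_from_integrals)
    fix A :: "'a set" assume [measurable]: "A \<in> sets borel"
    have "(\<integral>\<^sup>+z. indicator A (snd z) \<partial>\<gamma>) = (\<integral>\<^sup>+x. k x * indicator A (snd (snd x)) \<partial>(\<pi>1 \<Otimes>\<^sub>M \<pi>2))"
      by (rule \<gamma>_integral[of "\<lambda>z. indicator A (snd z)", simplified]) measurable
    also have "\<dots> = (\<integral>\<^sup>+q. indicator A (snd q) \<partial>\<pi>2)"
      by (rule marg2) measurable
    finally show "(\<integral>\<^sup>+z. indicator A (snd z) \<partial>\<gamma>) = (\<integral>\<^sup>+q. indicator A (snd q) \<partial>\<pi>2)" .
  qed measurable
  moreover have "prob_space \<gamma>"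
  proof
    have "emeasure \<gamma> (space \<gamma>) = (\<integral>\<^sup>+z. 1 \<partial>\<gamma>)" by simp
    also have "\<dots> = (\<integral>\<^sup>+x. k x * 1 \<partial>(\<pi>1 \<Otimes>\<^sub>M \<pi>2))"
      by (rule \<gamma>_integral) measurable
    also have "\<dots> = (\<integral>\<^sup>+p. 1 \<partial>\<pi>1)" by (rule marg1) measurable
    also have "\<dots> = 1" using prob_space.emeasure_space_1[OF c1(2)] by simp
    finally show "emeasure \<gamma> (space \<gamma>) = 1" .
  qed
  ultimately show "\<gamma> \<in> couplings \<mu> \<rho>" unfolding couplings_def using sets_\<gamma> c1(3) c2(4) by simp
qed

text \<open>Inside each small
  cell of the middle marginal the second coordinates are transported independently.\<close>

lemma approximate_gluing:
  fixes d :: "nat \<Rightarrow> 'a::metric_space" and \<pi>1 \<pi>2 :: "('a \<times> 'a) measure"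
  assumes dense: "\<forall>x e. e > 0 \<longrightarrow> (\<exists>n. dist x (d n) < e)"
    and p1: "\<pi>1 \<in> couplings \<mu> \<nu>" and p2: "\<pi>2 \<in> couplings \<nu> \<rho>" and "e > 0"
  shows "\<exists>\<gamma>\<in>couplings \<mu> \<rho>. coupling_cost \<gamma> \<le> coupling_cost \<pi>1 + coupling_cost \<pi>2 + ennreal e"
proof -
  have [measurable_cong]: "sets \<pi>1 = sets borel" "sets \<pi>2 = sets borel"
    using couplingsD(1)[OF p1] couplingsD(1)[OF p2] by auto
  obtain c :: "'a \<Rightarrow> nat" where c[measurable]: "c \<in> borel \<rightarrow>\<^sub>M count_space UNIV"
    and small: "\<And>y y'. c y = c y' \<Longrightarrow> dist y y' < e"
    using small_cells[OF dense \<open>e > 0\<close>] by blast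
  define k where "k = (\<lambda>x::('a \<times> 'a) \<times> ('a \<times> 'a). cell_weight \<nu> c (c (snd (fst x))) (c (fst (snd x))))"
  have k_meas[measurable]: "k \<in> borel_measurable (\<pi>1 \<Otimes>\<^sub>M \<pi>2)" unfolding k_def by measurable
  have marg: "(\<integral>\<^sup>+x. k x * h (fst x) \<partial>(\<pi>1 \<Otimes>\<^sub>M \<pi>2)) = (\<integral>\<^sup>+p. h p \<partial>\<pi>1)"
      "(\<integral>\<^sup>+x. k x * h (snd x) \<partial>(\<pi>1 \<Otimes>\<^sub>M \<pi>2)) = (\<integral>\<^sup>+q. h q \<partial>\<pi>2)"
    if "h \<in> borel_measurable borel" for h
    unfolding k_def by (fact cell_weight_marginals[OF p1 p2 c that])+
  define \<gamma> where "\<gamma> = distr (density (\<pi>1 \<Otimes>\<^sub>M \<pi>2) k) borel (\<lambda>x. (fst (fst x), snd (snd x)))"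
  have \<gamma>_coupling: "\<gamma> \<in> couplings \<mu> \<rho>"
    unfolding \<gamma>_def by (rule glued_coupling(1)[OF dense p1 p2 k_meas]) (fact marg)+
  have \<gamma>_integral: "(\<integral>\<^sup>+z. h z \<partial>\<gamma>) = (\<integral>\<^sup>+x. k x * h (fst (fst x), snd (snd x)) \<partial>(\<pi>1 \<Otimes>\<^sub>M \<pi>2))"
    if "h \<in> borel_measurable borel" for h
    unfolding \<gamma>_def by (rule glued_coupling(2)[OF dense p1 p2 k_meas _ _ that]) (fact marg)+
  text \<open>Where k is positive the two middle points lie in one cell, hence are e-close.\<close>
  have pointwise: "k x * ennreal (dist (fst (fst x)) (snd (snd x))) \<le>
      k x * ennreal (dist (fst (fst x)) (snd (fst x))) + k x * ennreal e
        + k x * ennreal (dist (fst (snd x)) (snd (snd x)))" for x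
  proof (cases "k x = 0")
    case False
    then have "dist (snd (fst x)) (fst (snd x)) < e"
      by (intro small) (auto simp: k_def cell_weight_def split: if_splits)
    then have "dist (fst (fst x)) (snd (snd x))
        \<le> dist (fst (fst x)) (snd (fst x)) + e + dist (fst (snd x)) (snd (snd x))"
      using dist_triangle[of "fst (fst x)" "snd (snd x)" "snd (fst x)"]
        dist_triangle[of "snd (fst x)" "snd (snd x)" "fst (snd x)"] by linarith
    then have "ennreal (dist (fst (fst x)) (snd (snd x)))
        \<le> ennreal (dist (fst (fst x)) (snd (fst x))) + ennreal e + ennreal (dist (fst (snd x)) (snd (snd x)))"
      using \<open>e > 0\<close> by (simp add: ennreal_plus[symmetric] del: ennreal_plus)
    then show ?thesis by (metis distrib_left mult_left_mono zero_le)
  qed simp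
  have "(\<lambda>p::'a \<times> 'a. ennreal (dist (fst p) (snd p))) \<in> borel_measurable borel" by measurable
  from \<gamma>_integral[OF this]
  have "coupling_cost \<gamma> = (\<integral>\<^sup>+x. k x * ennreal (dist (fst (fst x)) (snd (snd x))) \<partial>(\<pi>1 \<Otimes>\<^sub>M \<pi>2))"
    unfolding coupling_cost_def by simp
  also have "\<dots> \<le> (\<integral>\<^sup>+x. k x * ennreal (dist (fst (fst x)) (snd (fst x))) + k x * ennreal e
      + k x * ennreal (dist (fst (snd x)) (snd (snd x))) \<partial>(\<pi>1 \<Otimes>\<^sub>M \<pi>2))"
    by (intro nn_integral_mono pointwise)
  also have "\<dots> = (\<integral>\<^sup>+x. k x * ennreal (dist (fst (fst x)) (snd (fst x))) \<partial>(\<pi>1 \<Otimes>\<^sub>M \<pi>2))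
      + (\<integral>\<^sup>+x. k x * ennreal e \<partial>(\<pi>1 \<Otimes>\<^sub>M \<pi>2))
      + (\<integral>\<^sup>+x. k x * ennreal (dist (fst (snd x)) (snd (snd x))) \<partial>(\<pi>1 \<Otimes>\<^sub>M \<pi>2))"
    by (simp add: nn_integral_add)
  also have "(\<integral>\<^sup>+x. k x * ennreal (dist (fst (fst x)) (snd (fst x))) \<partial>(\<pi>1 \<Otimes>\<^sub>M \<pi>2)) = coupling_cost \<pi>1"
    unfolding coupling_cost_def by (rule marg(1)) measurable
  also have "(\<integral>\<^sup>+x. k x * ennreal e \<partial>(\<pi>1 \<Otimes>\<^sub>M \<pi>2)) = (\<integral>\<^sup>+p. ennreal e \<partial>\<pi>1)"
    by (rule marg(1)) measurable
  also have "\<dots> = ennreal e"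
    using prob_space.emeasure_space_1[OF couplingsD(2)[OF p1]] by simp
  also have "(\<integral>\<^sup>+x. k x * ennreal (dist (fst (snd x)) (snd (snd x))) \<partial>(\<pi>1 \<Otimes>\<^sub>M \<pi>2)) = coupling_cost \<pi>2"
    unfolding coupling_cost_def by (rule marg(2)) measurable
  finally show ?thesis using \<gamma>_coupling by (auto simp: add_ac)
qed


section \<open>The Wasserstein distance is a finite pseudometric on P1\<close>

definition optimal_cost :: "'a::metric_space measure \<Rightarrow> 'a measure \<Rightarrow> ennreal" where
  "optimal_cost \<mu> \<nu> = (INF \<pi>\<in>couplings \<mu> \<nu>. coupling_cost \<pi>)"

lemma w1_optimal_cost: "w1 \<mu> \<nu> = enn2real (optimal_cost \<mu> \<nu>)"
  unfolding w1_def optimal_cost_def coupling_cost_def ..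

lemma optimal_cost_le: "\<pi> \<in> couplings \<mu> \<nu> \<Longrightarrow> optimal_cost \<mu> \<nu> \<le> coupling_cost \<pi>"
  unfolding optimal_cost_def by (rule INF_lower)

text \<open>In a proper (hence separable) space the optimal cost satisfies the triangle inequality,
  by approximate gluing of almost optimal couplings.\<close>

lemma optimal_cost_triangle:
  fixes \<mu> \<nu> \<rho> :: "'a::metric_space measure"
  assumes "proper_space TYPE('a)"
  shows "optimal_cost \<mu> \<rho> \<le> optimal_cost \<mu> \<nu> + optimal_cost \<nu> \<rho>"
proof (rule ennreal_le_epsilon)
  obtain d :: "nat \<Rightarrow> 'a" where dense: "\<forall>x e. e > 0 \<longrightarrow> (\<exists>n. dist x (d n) < e)"
    using proper_space_separable[OF assms] by blast
  fix e :: real assume fin: "optimal_cost \<mu> \<nu> + optimal_cost \<nu> \<rho> < top" and "0 < e"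
  have almost_optimal: "\<exists>\<pi>\<in>couplings a b. coupling_cost \<pi> < optimal_cost a b + ennreal (e/3)"
    if "optimal_cost a b < top" for a b :: "'a measure"
  proof -
    have "optimal_cost a b < optimal_cost a b + ennreal (e/3)"
      using that \<open>0 < e\<close> ennreal_add_left_cancel_less[of "optimal_cost a b" 0] by (simp add: less_top)
    then show ?thesis unfolding optimal_cost_def by (simp add: INF_less_iff)
  qed
  obtain \<pi>1 where p1: "\<pi>1 \<in> couplings \<mu> \<nu>" "coupling_cost \<pi>1 < optimal_cost \<mu> \<nu> + ennreal (e/3)"
    using almost_optimal[of \<mu> \<nu>] fin by (auto simp: top.not_eq_extremum)
  obtain \<pi>2 where p2: "\<pi>2 \<in> couplings \<nu> \<rho>" "coupling_cost \<pi>2 < optimal_cost \<nu> \<rho> + ennreal (e/3)"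
    using almost_optimal[of \<nu> \<rho>] fin by (auto simp: top.not_eq_extremum)
  obtain \<gamma> where g: "\<gamma> \<in> couplings \<mu> \<rho>"
    "coupling_cost \<gamma> \<le> coupling_cost \<pi>1 + coupling_cost \<pi>2 + ennreal (e/3)"
    using approximate_gluing[OF dense p1(1) p2(1), of "e/3"] \<open>0 < e\<close> by auto
  have "optimal_cost \<mu> \<rho> \<le> coupling_cost \<gamma>" by (rule optimal_cost_le[OF g(1)])
  also note g(2)
  also have "coupling_cost \<pi>1 + coupling_cost \<pi>2 + ennreal (e/3)
      \<le> (optimal_cost \<mu> \<nu> + ennreal (e/3)) + (optimal_cost \<nu> \<rho> + ennreal (e/3)) + ennreal (e/3)"
    using p1(2) p2(2) by (intro add_mono order.refl less_imp_le)
  also have "\<dots> = optimal_cost \<mu> \<nu> + optimal_cost \<nu> \<rho> + ennreal e"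
    using \<open>0 < e\<close> by (simp add: ennreal_plus[symmetric] add_ac del: ennreal_plus)
  finally show "optimal_cost \<mu> \<rho> \<le> optimal_cost \<mu> \<nu> + optimal_cost \<nu> \<rho> + ennreal e" .
qed

lemma measurable_from_borel:
  "sets M = sets borel \<Longrightarrow> f \<in> measurable borel N \<Longrightarrow> f \<in> measurable M N"
  by (subst measurable_cong_sets[of M borel N N]) auto

lemma graph_coupling:
  fixes \<mu> :: "'a::metric_space measure"
  assumes "prob_space \<mu>" and sets_\<mu>: "sets \<mu> = sets borel" and "continuous_on UNIV g"
  shows "distr \<mu> borel (\<lambda>x. (x, g x)) \<in> couplings \<mu> (distr \<mu> borel g)"
    and "coupling_cost (distr \<mu> borel (\<lambda>x. (x, g x))) = (\<integral>\<^sup>+x. ennreal (dist x (g x)) \<partial>\<mu>)"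
proof -
  have [measurable_cong]: "sets \<mu> = sets borel" by (fact sets_\<mu>)
  have g[measurable]: "g \<in> borel_measurable borel"
    using assms(3) by (rule borel_measurable_continuous_onI)
  have graph[measurable]: "(\<lambda>x. (x, g x)) \<in> measurable \<mu> borel"
    using assms(3) by (intro measurable_from_borel[OF sets_\<mu>] borel_measurable_continuous_onI
        continuous_on_Pair continuous_on_id)
  have "distr (distr \<mu> borel (\<lambda>x. (x, g x))) borel fst = \<mu>"
    by (simp add: distr_distr[OF fst_borel_measurable graph] comp_def distr_id2[OF sets_\<mu>[symmetric]])
  moreover have "distr (distr \<mu> borel (\<lambda>x. (x, g x))) borel snd = distr \<mu> borel g"
    by (simp add: distr_distr[OF snd_borel_measurable graph] comp_def)
  moreover have "prob_space (distr \<mu> borel (\<lambda>x. (x, g x)))"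
    using prob_space.prob_space_distr[OF assms(1) graph] .
  ultimately show "distr \<mu> borel (\<lambda>x. (x, g x)) \<in> couplings \<mu> (distr \<mu> borel g)"
    unfolding couplings_def by simp
  show "coupling_cost (distr \<mu> borel (\<lambda>x. (x, g x))) = (\<integral>\<^sup>+x. ennreal (dist x (g x)) \<partial>\<mu>)"
    unfolding coupling_cost_def by (subst nn_integral_distr) auto
qed

lemma swap_coupling:
  fixes \<mu> \<nu> :: "'a::metric_space measure"
  assumes "\<pi> \<in> couplings \<mu> \<nu>"
  shows "distr \<pi> borel prod.swap \<in> couplings \<nu> \<mu>"
    and "coupling_cost (distr \<pi> borel prod.swap) = coupling_cost \<pi>"
proof -
  note c = couplingsD[OF assms]
  have [measurable_cong]: "sets \<pi> = sets borel" by (fact c(1))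
  have swap[measurable]: "prod.swap \<in> measurable \<pi> borel"
    by (intro measurable_from_borel[OF c(1)] borel_measurable_continuous_onI continuous_intros)
  have "distr (distr \<pi> borel prod.swap) borel fst = \<nu>"
    using c(4) by (simp add: distr_distr[OF fst_borel_measurable swap] comp_def)
  moreover have "distr (distr \<pi> borel prod.swap) borel snd = \<mu>"
    using c(3) by (simp add: distr_distr[OF snd_borel_measurable swap] comp_def)
  moreover have "prob_space (distr \<pi> borel prod.swap)"
    using prob_space.prob_space_distr[OF c(2) swap] .
  ultimately show "distr \<pi> borel prod.swap \<in> couplings \<nu> \<mu>"
    unfolding couplings_def by simp
  show "coupling_cost (distr \<pi> borel prod.swap) = coupling_cost \<pi>"
    unfolding coupling_cost_def by (subst nn_integral_distr) (auto simp: dist_commute)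
qed

lemma optimal_cost_sym: "optimal_cost \<mu> \<nu> = optimal_cost \<nu> (\<mu> :: 'a::metric_space measure)"
proof -
  have *: "optimal_cost b a \<le> optimal_cost a b" for a b :: "'a measure"
    unfolding optimal_cost_def[of a b]
  proof (rule INF_greatest)
    fix \<pi> assume "\<pi> \<in> couplings a b"
    from optimal_cost_le[OF swap_coupling(1)[OF this]] swap_coupling(2)[OF this]
    show "optimal_cost b a \<le> coupling_cost \<pi>" by simp
  qed
  show ?thesis using *[of \<mu> \<nu>] *[of \<nu> \<mu>] by (rule antisym)
qed

lemma P1D: "\<mu> \<in> P1 \<Longrightarrow>
    sets \<mu> = sets borel \<and> prob_space \<mu> \<and> (\<exists>x0. (\<integral>\<^sup>+x. ennreal (dist x x0) \<partial>\<mu>) < \<infinity>)"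
  unfolding P1_def by auto

lemma optimal_cost_self:
  assumes "\<mu> \<in> P1"
  shows "optimal_cost \<mu> \<mu> = 0"
proof -
  have "sets \<mu> = sets borel" "prob_space \<mu>" using P1D[OF assms] by auto
  moreover have "distr \<mu> borel (\<lambda>x. x) = \<mu>" using calculation(1) by (intro distr_id2) simp
  ultimately have "distr \<mu> borel (\<lambda>x. (x, x)) \<in> couplings \<mu> \<mu>"
    and "coupling_cost (distr \<mu> borel (\<lambda>x. (x, x))) = 0"
    using graph_coupling[of \<mu> "\<lambda>x. x"] by (simp_all add: continuous_on_id)
  then show ?thesis using optimal_cost_le[of _ \<mu> \<mu>] by (metis le_zero_eq)
qed

lemma P1_first_moment:
  assumes "\<mu> \<in> P1"
  shows "(\<integral>\<^sup>+x. ennreal (dist x y) \<partial>\<mu>) < \<infinity>"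
proof -
  obtain x0 where x0: "(\<integral>\<^sup>+x. ennreal (dist x x0) \<partial>\<mu>) < \<infinity>"
    and "sets \<mu> = sets borel" and "prob_space \<mu>"
    using P1D[OF assms] by blast
  have "(\<integral>\<^sup>+x. ennreal (dist x y) \<partial>\<mu>) \<le> (\<integral>\<^sup>+x. ennreal (dist x x0) + ennreal (dist x0 y) \<partial>\<mu>)"
    by (intro nn_integral_mono) (simp add: dist_triangle flip: ennreal_plus)
  also have "\<dots> = (\<integral>\<^sup>+x. ennreal (dist x x0) \<partial>\<mu>) + ennreal (dist x0 y)"
    using prob_space.emeasure_space_1[OF \<open>prob_space \<mu>\<close>]
    by (subst nn_integral_add) (auto intro!: measurable_from_borel[OF \<open>sets \<mu> = sets borel\<close>]
        borel_measurable_continuous_onI continuous_intros)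
  also have "\<dots> < \<infinity>" using x0 by (simp add: less_top[symmetric])
  finally show ?thesis .
qed

lemma optimal_cost_dirac:
  assumes "\<mu> \<in> P1"
  shows "optimal_cost \<mu> (return borel y) < \<infinity>"
proof -
  have "sets \<mu> = sets borel" "prob_space \<mu>" using P1D[OF assms] by auto
  then have "optimal_cost \<mu> (distr \<mu> borel (\<lambda>_. y)) \<le> (\<integral>\<^sup>+x. ennreal (dist x y) \<partial>\<mu>)"
    using graph_coupling[of \<mu> "\<lambda>_. y"] optimal_cost_le by (metis continuous_on_const)
  also have "\<dots> < \<infinity>" by (rule P1_first_moment[OF assms])
  finally have "optimal_cost \<mu> (distr \<mu> borel (\<lambda>_. y)) < \<infinity>" .
  moreover have "distr \<mu> borel (\<lambda>_. y) = return borel y"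
    by (rule prob_space.distr_const[OF \<open>prob_space \<mu>\<close>]) simp
  ultimately show ?thesis by simp
qed

lemma optimal_cost_finite:
  assumes "proper_space TYPE('a::metric_space)" "\<mu> \<in> P1" "\<nu> \<in> (P1 :: 'a measure set)"
  shows "optimal_cost \<mu> \<nu> < \<infinity>"
proof -
  define y :: 'a where "y = undefined"  \<comment> \<open>compare both measures with any Dirac measure\<close>
  have "optimal_cost \<mu> \<nu> \<le> optimal_cost \<mu> (return borel y) + optimal_cost (return borel y) \<nu>"
    by (rule optimal_cost_triangle[OF assms(1)])
  also have "\<dots> < \<infinity>"
    using optimal_cost_dirac[OF assms(2)] optimal_cost_dirac[OF assms(3)]
    by (simp add: optimal_cost_sym[of "return borel y"] less_top[symmetric])
  finally show ?thesis .
qed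

lemma w1_triangle:
  assumes "proper_space TYPE('a::metric_space)" "\<mu> \<in> P1" "\<nu> \<in> P1" "\<rho> \<in> (P1 :: 'a measure set)"
  shows "w1 \<mu> \<rho> \<le> w1 \<mu> \<nu> + w1 \<nu> \<rho>"
proof -
  have fin: "optimal_cost \<mu> \<nu> < top" "optimal_cost \<nu> \<rho> < top"
    using optimal_cost_finite assms by auto
  have "enn2real (optimal_cost \<mu> \<rho>) \<le> enn2real (optimal_cost \<mu> \<nu> + optimal_cost \<nu> \<rho>)"
    using fin by (intro enn2real_mono optimal_cost_triangle[OF assms(1)]) (simp add: less_top[symmetric])
  also have "\<dots> = enn2real (optimal_cost \<mu> \<nu>) + enn2real (optimal_cost \<nu> \<rho>)"
    using fin by (intro enn2real_plus) (auto simp: less_top[symmetric])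
  finally show ?thesis unfolding w1_optimal_cost .
qed

lemma w1_sym: "w1 \<mu> \<nu> = w1 \<nu> \<mu>"
  unfolding w1_optimal_cost using optimal_cost_sym by metis

lemma w1_self: "\<mu> \<in> P1 \<Longrightarrow> w1 \<mu> \<mu> = 0"
  unfolding w1_optimal_cost by (simp add: optimal_cost_self)

lemma w1_nonneg: "w1 \<mu> \<nu> \<ge> 0"
  unfolding w1_optimal_cost by simp


section \<open>Shadowing of the perturbed dynamics\<close>

lemma funpow_P1:
  fixes G :: "'a::metric_space measure \<Rightarrow> 'a measure"
  shows "G ` P1 \<subseteq> P1 \<Longrightarrow> \<mu> \<in> P1 \<Longrightarrow> (G ^^ j) \<mu> \<in> P1"
  by (induction j) (auto simp: image_subset_iff)

lemma w1_nbhdI: "\<mu> \<in> P1 \<Longrightarrow> \<nu> \<in> B \<Longrightarrow> w1 \<mu> \<nu> < \<delta> \<Longrightarrow> \<mu> \<in> w1_nbhd B \<delta>"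
  unfolding w1_nbhd_def by blast

lemma subset_w1_nbhd:
  assumes "B \<subseteq> P1" "\<delta> > 0"
  shows "B \<subseteq> w1_nbhd B \<delta>"
proof
  fix \<mu> assume "\<mu> \<in> B"
  with assms show "\<mu> \<in> w1_nbhd B \<delta>" by (intro w1_nbhdI[of \<mu> \<mu>]) (auto simp: w1_self)
qed

lemma subset_w1_closure: "U \<subseteq> P1 \<Longrightarrow> U \<subseteq> w1_closure U"
  unfolding w1_closure_def by (force simp: w1_self)

lemma w1_nbhd_subset_P1: "w1_nbhd B \<delta> \<subseteq> P1"
  unfolding w1_nbhd_def by blast

lemma uniform_approximation:
  assumes "(\<lambda>n. SUP \<mu>\<in>U. ennreal (w1 (\<Phi> \<mu>) (F n \<mu>))) \<longlonglongrightarrow> 0" and "\<eta> > 0"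
  shows "\<exists>N. \<forall>n\<ge>N. \<forall>\<mu>\<in>U. w1 (\<Phi> \<mu>) (F n \<mu>) < \<eta>"
proof -
  have "eventually (\<lambda>n. (SUP \<mu>\<in>U. ennreal (w1 (\<Phi> \<mu>) (F n \<mu>))) < ennreal \<eta>) sequentially"
    using order_tendstoD(2)[OF assms(1)] \<open>\<eta> > 0\<close> by simp
  then obtain N where N: "\<And>n. n \<ge> N \<Longrightarrow> (SUP \<mu>\<in>U. ennreal (w1 (\<Phi> \<mu>) (F n \<mu>))) < ennreal \<eta>"
    unfolding eventually_sequentially by blast
  have "w1 (\<Phi> \<mu>) (F n \<mu>) < \<eta>" if "n \<ge> N" "\<mu> \<in> U" for n \<mu>
  proof -
    have "ennreal (w1 (\<Phi> \<mu>) (F n \<mu>)) < ennreal \<eta>"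
      using N[OF \<open>n \<ge> N\<close>] \<open>\<mu> \<in> U\<close> by (meson SUP_upper order.strict_trans1)
    then show ?thesis using ennreal_less_iff[OF w1_nonneg] by blast
  qed
  then show ?thesis by blast
qed

lemma shadowing_step:
  fixes \<Phi> F :: "'a::metric_space measure \<Rightarrow> 'a measure"
  assumes proper: "proper_space TYPE('a)"
    and "\<Phi> ` P1 \<subseteq> P1" "F ` P1 \<subseteq> P1" "B \<subseteq> P1"
    and a: "a \<in> P1" and b: "b \<in> B" and close: "w1 a b < min d \<delta>"
    and cont: "\<And>x y. x \<in> w1_nbhd B \<delta> \<Longrightarrow> y \<in> w1_nbhd B \<delta> \<Longrightarrow> w1 x y < d \<Longrightarrow> w1 (\<Phi> x) (\<Phi> y) < \<epsilon>"
    and approx: "\<And>x. x \<in> w1_nbhd B \<delta> \<Longrightarrow> w1 (\<Phi> x) (F x) < \<epsilon>"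
  shows "w1 (\<Phi> a) (F b) < 2 * \<epsilon>"
proof -
  have "b \<in> P1" using b \<open>B \<subseteq> P1\<close> by blast
  have "\<delta> > 0" using close w1_nonneg[of a b] by linarith
  have a_nbhd: "a \<in> w1_nbhd B \<delta>" using a b close by (intro w1_nbhdI) auto
  have b_nbhd: "b \<in> w1_nbhd B \<delta>" using b subset_w1_nbhd[OF \<open>B \<subseteq> P1\<close> \<open>\<delta> > 0\<close>] by blast
  have "\<Phi> a \<in> P1" "\<Phi> b \<in> P1" "F b \<in> P1" using assms(2,3) a \<open>b \<in> P1\<close> by auto
  then have "w1 (\<Phi> a) (F b) \<le> w1 (\<Phi> a) (\<Phi> b) + w1 (\<Phi> b) (F b)"
    by (intro w1_triangle[OF proper])
  also have "\<dots> < 2 * \<epsilon>"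
    using cont[OF a_nbhd b_nbhd] approx[OF b_nbhd] close by simp
  finally show ?thesis .
qed

lemma finite_horizon_shadowing:
  fixes \<Phi> :: "'a::metric_space measure \<Rightarrow> 'a measure" and F :: "nat \<Rightarrow> 'a measure \<Rightarrow> 'a measure"
  assumes proper: "proper_space TYPE('a)"
    and \<Phi>_P1: "\<Phi> ` P1 \<subseteq> P1" and F_P1: "\<And>n. F n ` P1 \<subseteq> P1" and "B \<subseteq> P1" and "\<delta> > 0"
    and approx: "\<And>\<eta>. \<eta> > 0 \<Longrightarrow> \<exists>N. \<forall>n\<ge>N. \<forall>\<mu>\<in>w1_nbhd B \<delta>. w1 (\<Phi> \<mu>) (F n \<mu>) < \<eta>"
    and ucont: "w1_unif_continuous_on (w1_nbhd B \<delta>) \<Phi>"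
  shows "\<eta> > 0 \<Longrightarrow> \<exists>N. \<forall>n\<ge>N. \<forall>\<nu>\<in>P1. (\<forall>j\<le>K. (F n ^^ j) \<nu> \<in> B) \<longrightarrow>
           (\<forall>j\<le>K. w1 ((\<Phi> ^^ j) \<nu>) ((F n ^^ j) \<nu>) < \<eta>)"
proof (induction K arbitrary: \<eta>)
  case 0
  then show ?case by (auto simp: w1_self)
next
  case (Suc K)
  define \<epsilon> where "\<epsilon> = min \<eta> \<delta> / 2"
  have "\<epsilon> > 0" using Suc.prems \<open>\<delta> > 0\<close> by (simp add: \<epsilon>_def)
  obtain d where "d > 0"
    and cont: "\<And>x y. x \<in> w1_nbhd B \<delta> \<Longrightarrow> y \<in> w1_nbhd B \<delta> \<Longrightarrow> w1 x y < d \<Longrightarrow> w1 (\<Phi> x) (\<Phi> y) < \<epsilon>"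
    using ucont \<open>\<epsilon> > 0\<close> unfolding w1_unif_continuous_on_def by metis
  obtain N1 where N1: "\<forall>n\<ge>N1. \<forall>\<nu>\<in>P1. (\<forall>j\<le>K. (F n ^^ j) \<nu> \<in> B) \<longrightarrow>
      (\<forall>j\<le>K. w1 ((\<Phi> ^^ j) \<nu>) ((F n ^^ j) \<nu>) < min (min d \<delta>) \<eta>)"
    using Suc.IH[of "min (min d \<delta>) \<eta>"] \<open>d > 0\<close> \<open>\<delta> > 0\<close> Suc.prems by auto
  obtain N2 where N2: "\<forall>n\<ge>N2. \<forall>\<mu>\<in>w1_nbhd B \<delta>. w1 (\<Phi> \<mu>) (F n \<mu>) < \<epsilon>"
    using approx[OF \<open>\<epsilon> > 0\<close>] by blast
  have "w1 ((\<Phi> ^^ j) \<nu>) ((F n ^^ j) \<nu>) < \<eta>"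
    if n: "n \<ge> max N1 N2" and "\<nu> \<in> P1" and orbit: "\<forall>j\<le>Suc K. (F n ^^ j) \<nu> \<in> B" and "j \<le> Suc K"
    for n \<nu> j
  proof -
    have "N1 \<le> n" "N2 \<le> n" using n by auto
    have IH: "w1 ((\<Phi> ^^ j) \<nu>) ((F n ^^ j) \<nu>) < min (min d \<delta>) \<eta>" if "j \<le> K" for j
      using N1 \<open>N1 \<le> n\<close> \<open>\<nu> \<in> P1\<close> orbit that by simp
    show ?thesis
    proof (cases "j \<le> K")
      case True
      then show ?thesis using IH by fastforce
    next
      case False
      then have "j = Suc K" using \<open>j \<le> Suc K\<close> by simp
      have "w1 (\<Phi> ((\<Phi> ^^ K) \<nu>)) (F n ((F n ^^ K) \<nu>)) < 2 * \<epsilon>"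
      proof (rule shadowing_step[OF proper \<Phi>_P1 F_P1 \<open>B \<subseteq> P1\<close>])
        show "(\<Phi> ^^ K) \<nu> \<in> P1" using funpow_P1[OF \<Phi>_P1 \<open>\<nu> \<in> P1\<close>] .
        show "(F n ^^ K) \<nu> \<in> B" using orbit by simp
        show "w1 ((\<Phi> ^^ K) \<nu>) ((F n ^^ K) \<nu>) < min d \<delta>" using IH[of K] by simp
        show "w1 (\<Phi> x) (F n x) < \<epsilon>" if "x \<in> w1_nbhd B \<delta>" for x using N2 \<open>N2 \<le> n\<close> that by auto
      qed (fact cont)
      then show ?thesis using \<open>j = Suc K\<close> by (simp add: \<epsilon>_def)
    qed
  qed
  then show ?case by blast
qed

lemma slowly_growing_horizon:
  fixes m N :: "nat \<Rightarrow> nat"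
  assumes m: "filterlim m at_top sequentially"
  obtains K where "filterlim K at_top sequentially" "\<And>n. K n \<le> m n" "\<And>n. 0 < K n \<Longrightarrow> N (K n) \<le> n"
proof
  define T where "T n = insert 0 {k. k \<le> m n \<and> N k \<le> n}" for n
  define K where "K n = Max (T n)" for n
  have fin: "finite (T n)" for n
    unfolding T_def by (rule finite_insert[THEN iffD2], rule finite_subset[of _ "{..m n}"]) auto
  have K_in: "K n \<in> T n" for n unfolding K_def by (rule Max_in[OF fin]) (simp add: T_def)
  show "K n \<le> m n" "0 < K n \<Longrightarrow> N (K n) \<le> n" for n using K_in[of n] by (auto simp: T_def)
  show "filterlim K at_top sequentially"
    unfolding filterlim_at_top
  proof
    fix L :: nat
    have "eventually (\<lambda>n. L \<le> m n) sequentially" using m unfolding filterlim_at_top by blast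
    moreover have "eventually (\<lambda>n. N L \<le> n) sequentially" by (rule eventually_ge_at_top)
    ultimately show "eventually (\<lambda>n. L \<le> K n) sequentially"
      by eventually_elim (auto simp: K_def T_def intro!: Max_ge fin)
  qed
qed


lemma w1_tendsto_close:
  assumes proper: "proper_space TYPE('a::metric_space)"
    and "\<And>i. x i \<in> P1" "\<And>i. y i \<in> P1" "\<rho> \<in> (P1 :: 'a measure set)"
    and close: "\<And>i. w1 (x i) (y i) \<le> e i" and "e \<longlonglongrightarrow> 0"
    and lim: "(\<lambda>i. w1 (y i) \<rho>) \<longlonglongrightarrow> 0"
  shows "(\<lambda>i. w1 (x i) \<rho>) \<longlonglongrightarrow> 0"
proof (rule tendsto_sandwich[of "\<lambda>_. 0" _ _ "\<lambda>i. e i + w1 (y i) \<rho>"])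
  have "w1 (x i) \<rho> \<le> w1 (x i) (y i) + w1 (y i) \<rho>" for i
    using assms(2-4) by (rule w1_triangle[OF proper])
  then show "\<forall>\<^sub>F i in sequentially. w1 (x i) \<rho> \<le> e i + w1 (y i) \<rho>"
    using close by (intro always_eventually allI) (meson add_right_mono order_trans)
  show "(\<lambda>i. e i + w1 (y i) \<rho>) \<longlonglongrightarrow> 0"
    using tendsto_add[OF \<open>e \<longlonglongrightarrow> 0\<close> lim] by simp
qed (auto simp: w1_nonneg)

lemma orbit_tail:
  assumes orbit: "\<And>k. k \<le> m \<Longrightarrow> (G ^^ k) \<mu> \<in> B" and "K \<le> m"
  shows "\<And>j. j \<le> K \<Longrightarrow> (G ^^ j) ((G ^^ (m - K)) \<mu>) \<in> B"
    and "(G ^^ K) ((G ^^ (m - K)) \<mu>) = (G ^^ m) \<mu>"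
proof -
  have shift: "(G ^^ j) ((G ^^ (m - K)) \<mu>) = (G ^^ (j + (m - K))) \<mu>" for j
    by (simp add: funpow_add)
  show "(G ^^ j) ((G ^^ (m - K)) \<mu>) \<in> B" if "j \<le> K" for j
    unfolding shift using that \<open>K \<le> m\<close> by (intro orbit) simp
  show "(G ^^ K) ((G ^^ (m - K)) \<mu>) = (G ^^ m) \<mu>"
    unfolding shift using \<open>K \<le> m\<close> by simp
qed

lemma inverse_Suc_tendsto_zero:
  "filterlim K at_top sequentially \<Longrightarrow> (\<lambda>n. 1 / real (Suc (K n))) \<longlonglongrightarrow> 0"
  using filterlim_compose[OF LIMSEQ_inverse_real_of_nat] by (simp add: comp_def divide_inverse)

text \<open>Given F n-orbits of length m n in B, restart them K n steps
  before their end, where K n \<rightarrow> \<infinity> slowly; by shadowing, the \<Phi>-orbits of the restarting points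
  stay in the \<delta>-neighbourhood of B for K n steps, and their endpoints, which converge along a
  subsequence by admissibility of the closure, are 1/(K n + 1)-close to those of the F n-orbits.\<close>

lemma admissible_by_shadowing:
  fixes \<Phi> :: "'a::metric_space measure \<Rightarrow> 'a measure" and F :: "nat \<Rightarrow> 'a measure \<Rightarrow> 'a measure"
  assumes proper: "proper_space TYPE('a)"
    and \<Phi>_P1: "\<Phi> ` P1 \<subseteq> P1" and F_P1: "\<And>n. F n ` P1 \<subseteq> P1" and "B \<subseteq> P1" and "\<delta> > 0"
    and shadow: "\<And>K \<eta>. \<eta> > 0 \<Longrightarrow> \<exists>N. \<forall>n\<ge>N. \<forall>\<nu>\<in>P1. (\<forall>j\<le>K. (F n ^^ j) \<nu> \<in> B) \<longrightarrow>
                    (\<forall>j\<le>K. w1 ((\<Phi> ^^ j) \<nu>) ((F n ^^ j) \<nu>) < \<eta>)"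
    and adm: "admissible (\<lambda>_. \<Phi>) (w1_closure (w1_nbhd B \<delta>))"
  shows "admissible F B"
  unfolding admissible_def
proof (intro allI impI)
  fix \<mu>s :: "nat \<Rightarrow> 'a measure" and m :: "nat \<Rightarrow> nat"
  assume "filterlim m at_top sequentially \<and> (\<forall>n k. k \<le> m n \<longrightarrow> (F n ^^ k) (\<mu>s n) \<in> B)"
  then have m: "filterlim m at_top sequentially"
    and orbit: "\<And>n k. k \<le> m n \<Longrightarrow> (F n ^^ k) (\<mu>s n) \<in> B" by auto
  have "\<forall>K. \<exists>N. \<forall>n\<ge>N. \<forall>\<nu>\<in>P1. (\<forall>j\<le>K. (F n ^^ j) \<nu> \<in> B) \<longrightarrow>
      (\<forall>j\<le>K. w1 ((\<Phi> ^^ j) \<nu>) ((F n ^^ j) \<nu>) < min (1 / real (Suc K)) \<delta>)"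
  proof
    fix K :: nat
    have "min (1 / real (Suc K)) \<delta> > 0" using \<open>\<delta> > 0\<close> by simp
    from shadow[OF this] show "\<exists>N. \<forall>n\<ge>N. \<forall>\<nu>\<in>P1. (\<forall>j\<le>K. (F n ^^ j) \<nu> \<in> B) \<longrightarrow>
      (\<forall>j\<le>K. w1 ((\<Phi> ^^ j) \<nu>) ((F n ^^ j) \<nu>) < min (1 / real (Suc K)) \<delta>)" .
  qed
  then obtain N where N: "\<And>K n \<nu> j. N K \<le> n \<Longrightarrow> \<nu> \<in> P1 \<Longrightarrow> (\<forall>j\<le>K. (F n ^^ j) \<nu> \<in> B) \<Longrightarrow>
      j \<le> K \<Longrightarrow> w1 ((\<Phi> ^^ j) \<nu>) ((F n ^^ j) \<nu>) < min (1 / real (Suc K)) \<delta>"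
    by metis
  obtain K where K: "filterlim K at_top sequentially" "\<And>n. K n \<le> m n" "\<And>n. 0 < K n \<Longrightarrow> N (K n) \<le> n"
    using slowly_growing_horizon[OF m] by blast
  define \<nu> where "\<nu> n = (F n ^^ (m n - K n)) (\<mu>s n)" for n
  have orbit_\<nu>: "(F n ^^ j) (\<nu> n) \<in> B" if "j \<le> K n" for n j
    unfolding \<nu>_def using orbit_tail(1)[OF orbit K(2) that] .
  have endpoint: "(F n ^^ K n) (\<nu> n) = (F n ^^ m n) (\<mu>s n)" for n
    unfolding \<nu>_def using orbit_tail(2)[OF orbit K(2)] .
  have \<nu>_P1: "\<nu> n \<in> P1" for n using orbit_\<nu>[of 0 n] \<open>B \<subseteq> P1\<close> by auto
  have close: "w1 ((\<Phi> ^^ j) (\<nu> n)) ((F n ^^ j) (\<nu> n)) < min (1 / real (Suc (K n))) \<delta>"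
    if "j \<le> K n" for n j
  proof (cases "K n = 0")
    case True
    then show ?thesis using that \<nu>_P1[of n] \<open>\<delta> > 0\<close> by (simp add: w1_self)
  next
    case False
    then show ?thesis using N[OF K(3) \<nu>_P1 _ that] orbit_\<nu> by simp
  qed
  have "(\<Phi> ^^ j) (\<nu> n) \<in> w1_nbhd B \<delta>" if "j \<le> K n" for n j
    using close[OF that] orbit_\<nu>[OF that] funpow_P1[OF \<Phi>_P1 \<nu>_P1] by (intro w1_nbhdI) auto
  then have "(\<Phi> ^^ j) (\<nu> n) \<in> w1_closure (w1_nbhd B \<delta>)" if "j \<le> K n" for n j
    using subset_w1_closure[OF w1_nbhd_subset_P1] that by blast
  with adm K(1) obtain r \<rho> where r: "strict_mono r" and "\<rho> \<in> P1"
    and lim: "(\<lambda>i. w1 ((\<Phi> ^^ K (r i)) (\<nu> (r i))) \<rho>) \<longlonglongrightarrow> 0"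
    unfolding admissible_def by blast
  have "(\<lambda>i. 1 / real (Suc (K (r i)))) \<longlonglongrightarrow> 0"
    using LIMSEQ_subseq_LIMSEQ[OF inverse_Suc_tendsto_zero[OF K(1)] r] by (simp add: comp_def)
  moreover have "w1 ((F (r i) ^^ K (r i)) (\<nu> (r i))) ((\<Phi> ^^ K (r i)) (\<nu> (r i))) \<le> 1 / real (Suc (K (r i)))"
    for i using close[of "K (r i)" "r i"] by (simp add: w1_sym)
  ultimately have "(\<lambda>i. w1 ((F (r i) ^^ K (r i)) (\<nu> (r i))) \<rho>) \<longlonglongrightarrow> 0"
    using funpow_P1[OF F_P1 \<nu>_P1] funpow_P1[OF \<Phi>_P1 \<nu>_P1]
    by (intro w1_tendsto_close[OF proper _ _ \<open>\<rho> \<in> P1\<close> _ _ lim])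
  then show "\<exists>r \<rho>. strict_mono r \<and> \<rho> \<in> P1 \<and> (\<lambda>j. w1 ((F (r j) ^^ m (r j)) (\<mu>s (r j))) \<rho>) \<longlonglongrightarrow> 0"
    using r \<open>\<rho> \<in> P1\<close> by (auto simp: endpoint)
qed

text \<open>Closedness of B is used only through B \<subseteq> P1.\<close>

theorem mainTheorem7:
  fixes f :: "'a::metric_space \<Rightarrow> 'a"
    and B :: "'a measure set"
    and \<delta> :: real
    and F :: "nat \<Rightarrow> 'a measure \<Rightarrow> 'a measure"
  assumes "proper_space TYPE('a)"
    and "continuous_on UNIV f"
    and "w1_continuous (push f)"
    and "w1_closed B" and "w1_bounded B"
    and "\<delta> > 0"
    and "admissible (\<lambda>_. push f) (w1_closure (w1_nbhd B \<delta>))"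
    and "\<And>n. w1_continuous (F n)"
    and "(\<lambda>n. SUP \<mu>\<in>w1_nbhd B \<delta>. ennreal (w1 (push f \<mu>) (F n \<mu>))) \<longlonglongrightarrow> 0"
    and "w1_unif_continuous_on (w1_nbhd B \<delta>) (push f)"
  shows "admissible F B"
proof -
  have "B \<subseteq> P1" using assms(4) unfolding w1_closed_def by blast
  have push_P1: "push f ` P1 \<subseteq> P1" using assms(3) unfolding w1_continuous_def by blast
  have F_P1: "F n ` P1 \<subseteq> P1" for n using assms(8)[of n] unfolding w1_continuous_def by blast
  note approx = uniform_approximation[OF assms(9)]
  note shadow = finite_horizon_shadowing[OF assms(1) push_P1 F_P1 \<open>B \<subseteq> P1\<close> assms(6) approx assms(10)]
  show ?thesis
    by (rule admissible_by_shadowing[OF assms(1) push_P1 F_P1 \<open>B \<subseteq> P1\<close> assms(6) shadow assms(7)])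
qed

end
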